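(* Let $C$ be a $2\times N$ real matrix with non-negative entries and let $1\le p\le2$. If $C_{ij}=0$ for some entry, then $(C^{[p-1]})_{ij}\le0$.
   Context: For a real or complex matrix $C$ and real $r$, the $r$-th polar power is $C^{[r]}:=(CC^* )^{(r-1)/2}C$ (here $C^*=C^T$). For $p<2$ the exponent $(p-2)/2$ is negative; if $CC^T$ is singular, powers of the positive semidefinite matrix $CC^T$ are taken on its support (i.e. via its spectral decomposition, using only the nonzero eigenvalues), equivalently $C^{[r]}=|C^*|^{r-1}U$ where $C=U|C|$ is the polar decomposition. *)

theory Defs
  imports "HOL-Analysis.Analysis"
begin

definition diag_mat :: "('m::finite \<Rightarrow> real) \<Rightarrow> real^'m^'m" where
  "diag_mat d = (\<chi> i j. if i = j then d i else 0)"

definition supp_pow :: "real^'m^'m \<Rightarrow> real \<Rightarrow> real^'m^'m::finite" where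
  "supp_pow A s = (SOME B. \<exists>Q d. orthogonal_matrix Q \<and> A = Q ** diag_mat d ** transpose Q \<and>
      B = Q ** diag_mat (\<lambda>i. if d i = 0 then 0 else d i powr s) ** transpose Q)"

definition polar_power :: "real^'n^'m \<Rightarrow> real \<Rightarrow> real^'n^'m::finite" where
  "polar_power C r = supp_pow (C ** transpose C) ((r - 1) / 2) ** C"

end

theory Submission
  imports Defs
begin

(* Write C^[p-1] = B C with B = (C C^T)^s, s = (p - 2)/2 <= 0, and diagonalize the symmetric
   2x2 matrix C C^T = Q diag(d) Q^T.  If some d_k vanishes, the corresponding row of Q^T C
   vanishes, so C has rank at most one and B acts on C as a scalar: the zero entry stays zero.
   Otherwise, with i' the other row index, (B C)_ij = B_ii' C_i'j, and the off-diagonal entries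
   (C C^T)_ii' and B_ii' equal w (d_1 - d_2) and w (d_1^s - d_2^s) for one and the same w.
   The first is >= 0 because C >= 0, and t |-> t^s is antitone, so B_ii' <= 0. *)

lemma polar_coordinates_real:
  fixes x y :: real
  obtains t where "x = sqrt (x\<^sup>2 + y\<^sup>2) * cos t" and "y = sqrt (x\<^sup>2 + y\<^sup>2) * sin t"
proof
  let ?z = "Complex x y"
  show "x = sqrt (x\<^sup>2 + y\<^sup>2) * cos (Arg ?z)" "y = sqrt (x\<^sup>2 + y\<^sup>2) * sin (Arg ?z)"
    using arg_cong[OF rcis_cmod_Arg[of ?z], of Re] arg_cong[OF rcis_cmod_Arg[of ?z], of Im]
    by (simp_all add: complex_norm)
qed

lemma symmetric_2x2_orthogonally_diagonalizable:
  fixes A :: "real^2^2"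
  assumes "A $ 1 $ 2 = A $ 2 $ 1"
  shows "\<exists>Q d. orthogonal_matrix Q \<and> A = Q ** diag_mat d ** transpose Q"
proof -
  define r where "r = sqrt ((A$1$1 - A$2$2)\<^sup>2 + (2 * A$1$2)\<^sup>2)"
  obtain t where t: "A$1$1 - A$2$2 = r * cos (2 * t)" "2 * A$1$2 = r * sin (2 * t)"
  proof -
    obtain u where "A$1$1 - A$2$2 = r * cos u" "2 * A$1$2 = r * sin u"
      unfolding r_def by (rule polar_coordinates_real)
    then show thesis by (intro that[of "u / 2"]) simp_all
  qed
  define Q :: "real^2^2" where
    "Q = (\<chi> k l. if k = 1 then (if l = 1 then cos t else - sin t)
                  else (if l = 1 then sin t else cos t))"
  define d :: "2 \<Rightarrow> real" where
    "d k = (if k = 1 then (A$1$1 + A$2$2 + r) / 2 else (A$1$1 + A$2$2 - r) / 2)" for k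
  have "orthogonal_matrix Q"
    by (simp add: orthogonal_matrix_def Q_def vec_eq_iff forall_2 matrix_matrix_mult_def
        sum_2 transpose_def mat_def power2_eq_square[symmetric])
  moreover have "A = Q ** diag_mat d ** transpose Q"
    using t assms unfolding cos_double sin_double
    by (simp add: Q_def d_def vec_eq_iff forall_2 matrix_matrix_mult_def sum_2 transpose_def
        diag_mat_def) (use sin_cos_squared_add[of t] in algebra)
  ultimately show ?thesis by blast
qed

lemma supp_pow_spectral:
  fixes A :: "real^'m::finite^'m"
  assumes "\<exists>Q d. orthogonal_matrix Q \<and> A = Q ** diag_mat d ** transpose Q"
  obtains Q d where "orthogonal_matrix Q" and "A = Q ** diag_mat d ** transpose Q"
    and "supp_pow A s = Q ** diag_mat (\<lambda>k. if d k = 0 then 0 else d k powr s) ** transpose Q"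
proof -
  from assms have "\<exists>B Q d. orthogonal_matrix Q \<and> A = Q ** diag_mat d ** transpose Q \<and>
      B = Q ** diag_mat (\<lambda>k. if d k = 0 then 0 else d k powr s) ** transpose Q"
    by blast
  from someI_ex[OF this] show thesis
    using that unfolding supp_pow_def by blast
qed

lemma gram_eigenvalue_eq_row_norm:
  fixes C :: "real^'n::finite^'m::finite"
  assumes "orthogonal_matrix Q" and "C ** transpose C = Q ** diag_mat d ** transpose Q"
  shows "d k = (norm (row k (transpose Q ** C)))\<^sup>2"
proof -
  let ?M = "transpose Q ** C"
  have "?M ** transpose ?M = transpose Q ** (C ** transpose C) ** Q"
    by (simp add: matrix_transpose_mul matrix_mul_assoc)
  also have "\<dots> = diag_mat d"
    using assms unfolding orthogonal_matrix_def
    by (simp add: matrix_mul_assoc) (simp flip: matrix_mul_assoc)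
  finally have "diag_mat d = (\<chi> i j. row i ?M \<bullet> row j ?M)"
    by (simp add: matrix_mult_transpose_dot_row)
  from arg_cong[OF this, of "\<lambda>X. X $ k $ k"] show ?thesis
    by (simp add: diag_mat_def power2_norm_eq_inner)
qed

lemma diag_mat_mult_nth:
  "(diag_mat f ** M) $ k $ b = f k * M $ k $ b"
  unfolding matrix_matrix_mult_def diag_mat_def
  by (simp add: if_distrib[where f = "\<lambda>x. x * _"] cong: if_cong)

lemma spectral_mult_eq_scaleR_single_eigenvalue:
  fixes C :: "real^'n::finite^'m::finite"
  assumes "orthogonal_matrix Q" and "C ** transpose C = Q ** diag_mat d ** transpose Q"
    and "\<And>k. k \<noteq> l \<Longrightarrow> d k = 0"
  shows "Q ** diag_mat f ** transpose Q ** C = f l *\<^sub>R C"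
proof -
  let ?M = "transpose Q ** C"
  have "?M $ k $ b = 0" if "k \<noteq> l" for k b
  proof -
    have "row k ?M = 0"
      using gram_eigenvalue_eq_row_norm[OF assms(1,2), of k] assms(3)[OF that] by simp
    then show ?thesis
      by (simp add: row_def vec_eq_iff)
  qed
  then have diag_mult: "diag_mat f ** ?M = f l *\<^sub>R ?M"
    by (simp add: vec_eq_iff diag_mat_mult_nth) (metis mult_zero_right)
  have "Q ** diag_mat f ** transpose Q ** C = Q ** (diag_mat f ** ?M)"
    by (simp add: matrix_mul_assoc)
  also have "\<dots> = f l *\<^sub>R (Q ** ?M)"
    unfolding diag_mult by (metis matrix_scalar_ac scalar_matrix_assoc)
  also have "Q ** ?M = C"
    using assms(1) by (simp add: orthogonal_matrix_def matrix_mul_assoc)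
  finally show ?thesis .
qed

lemma UNIV_2_eq_pair:
  fixes i i' :: 2
  assumes "i \<noteq> i'"
  shows "UNIV = {i, i'}"
  using assms exhaust_2[of i] exhaust_2[of i'] by (auto simp: UNIV_2)

lemma orthogonal_2x2_conj_diag_off_diagonal:
  fixes Q :: "real^2^2"
  assumes "orthogonal_matrix Q" and "i \<noteq> i'"
  shows "(Q ** diag_mat g ** transpose Q) $ i $ i' = Q$i$1 * Q$i'$1 * (g 1 - g 2)"
proof -
  have "(Q ** transpose Q) $ i $ i' = 0"
    using assms by (simp add: orthogonal_matrix_def mat_def)
  then have "Q$i$2 * Q$i'$2 = - (Q$i$1 * Q$i'$1)"
    by (simp add: matrix_matrix_mult_def sum_2 transpose_def)
  then show ?thesis
    by (simp add: matrix_matrix_mult_def sum_2 diag_mat_def transpose_def algebra_simps)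
qed

lemma orthogonal_2x2_conj_diag_off_diagonal_antitone:
  fixes Q :: "real^2^2"
  assumes "orthogonal_matrix Q" and "i \<noteq> i'"
    and "(Q ** diag_mat d ** transpose Q) $ i $ i' \<ge> 0"
    and "\<And>k l. d k \<le> d l \<Longrightarrow> g l \<le> g k"
  shows "(Q ** diag_mat g ** transpose Q) $ i $ i' \<le> 0"
proof -
  define w where "w = Q$i$1 * Q$i'$1"
  have w_d: "w * (d 1 - d 2) \<ge> 0"
    using assms(3) orthogonal_2x2_conj_diag_off_diagonal[OF assms(1,2)] by (simp add: w_def)
  consider "d 1 = d 2" | "d 1 < d 2" | "d 2 < d 1"
    by linarith
  then have "w * (g 1 - g 2) \<le> 0"
  proof cases
    case 1
    then show ?thesis
      using assms(4)[of 1 2] assms(4)[of 2 1] by simp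
  next
    case 2
    then have "w \<le> 0" and "g 2 \<le> g 1"
      using w_d assms(4)[of 1 2] by (auto simp: zero_le_mult_iff)
    then show ?thesis
      by (simp add: mult_nonpos_nonneg)
  next
    case 3
    then have "w \<ge> 0" and "g 1 \<le> g 2"
      using w_d assms(4)[of 2 1] by (auto simp: zero_le_mult_iff)
    then show ?thesis
      by (simp add: mult_nonneg_nonpos)
  qed
  then show ?thesis
    using orthogonal_2x2_conj_diag_off_diagonal[OF assms(1,2)] by (simp add: w_def)
qed

lemma supp_pow_gram_mult_nonpos_at_zero_entry:
  fixes C :: "real^'n::finite^2"
  assumes nonneg: "\<forall>a b. C $ a $ b \<ge> 0" and "s \<le> 0" and Cij: "C $ i $ j = 0"
  shows "(supp_pow (C ** transpose C) s ** C) $ i $ j \<le> 0"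
proof -
  let ?A = "C ** transpose C"
  have "?A $ 1 $ 2 = ?A $ 2 $ 1"
    by (simp add: matrix_matrix_mult_def transpose_def mult.commute)
  then obtain Q d where Q: "orthogonal_matrix Q" and A: "?A = Q ** diag_mat d ** transpose Q"
    and B: "supp_pow ?A s = Q ** diag_mat (\<lambda>k. if d k = 0 then 0 else d k powr s) ** transpose Q"
    by (rule supp_pow_spectral[OF symmetric_2x2_orthogonally_diagonalizable])
  have d_nonneg: "d k \<ge> 0" for k
    using gram_eigenvalue_eq_row_norm[OF Q A] by simp
  consider (singular) k where "d k = 0" | (regular) "d 1 > 0" and "d 2 > 0"
    by (metis d_nonneg order_less_le)
  then show ?thesis
  proof cases
    case singular
    obtain l :: 2 where "l \<noteq> k"
      by (metis num1_eq1 one_neq_zero zero_neq_numeral)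
    then have "d k' = 0" if "k' \<noteq> l" for k'
      using singular that UNIV_2_eq_pair[of l k] by auto
    then have "supp_pow ?A s ** C = (if d l = 0 then 0 else d l powr s) *\<^sub>R C"
      unfolding B by (rule spectral_mult_eq_scaleR_single_eigenvalue[OF Q A])
    then show ?thesis
      using Cij by simp
  next
    case regular
    obtain i' :: 2 where i': "i \<noteq> i'"
      by (metis num1_eq1 one_neq_zero zero_neq_numeral)
    have d_pos: "d k > 0" for k
      using regular exhaust_2[of k] by auto
    have "(supp_pow ?A s ** C) $ i $ j = supp_pow ?A s $ i $ i' * C $ i' $ j"
      using Cij by (simp add: matrix_matrix_mult_def UNIV_2_eq_pair[OF i'] i')
    moreover have "supp_pow ?A s $ i $ i' \<le> 0"
      unfolding B
    proof (rule orthogonal_2x2_conj_diag_off_diagonal_antitone[OF Q i'])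
      show "(Q ** diag_mat d ** transpose Q) $ i $ i' \<ge> 0"
        unfolding A[symmetric] using nonneg
        by (simp add: matrix_matrix_mult_def transpose_def sum_nonneg)
      show "(if d l = 0 then 0 else d l powr s) \<le> (if d k = 0 then 0 else d k powr s)"
        if "d k \<le> d l" for k l
        using that d_pos[of k] d_pos[of l] powr_mono2'[OF \<open>s \<le> 0\<close>, of "d k" "d l"] by simp
    qed
    ultimately show ?thesis
      using nonneg by (simp add: mult_nonpos_nonneg)
  qed
qed

theorem mainTheorem11:
  fixes C :: "real^'n::finite^2" and p :: real and i :: 2 and j :: 'n
  assumes "\<forall>a b. C $ a $ b \<ge> 0"
    and "1 \<le> p" and "p \<le> 2"
    and "C $ i $ j = 0"
  shows "polar_power C (p - 1) $ i $ j \<le> 0"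
proof -
  have "(p - 1 - 1) / 2 \<le> 0"
    using \<open>p \<le> 2\<close> by simp
  then show ?thesis
    unfolding polar_power_def
    using supp_pow_gram_mult_nonpos_at_zero_entry[OF assms(1) _ assms(4)] by blast
qed

end
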